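(* Under the standing assumptions in the context, with $h^E$, $h^S$ defined as there, let $$h^Q(r)=\frac{q_w}{r\sqrt{2\eta(r)}},\qquad L(r)=\frac{1}{3\nu(r)\left(\dfrac{2\eta(r)}{3g\,\nu(r)}-h^Q(r)\right)}.$$ Then $L(r)>0$ and $$h^S(r)-h^E(r)\ \ge\ L(r)\,\big(h^S(r)\big)^2\,\big(1-\nu(r)\big)\qquad\text{for all } r\in[r_0,r_1].$$
   Context: Standing assumptions and notation. Let $g>0$, $0<r_0<r_1$, and let $f\in C^1([r_0,r_1])$ with $f'(r)\le 0$ for all $r\in[r_0,r_1]$, $f'(r_0)=0$, and $f(r_0)>f(r_1)$. Set $\nu(r)=1/\sqrt{1+(f'(r))^2}$. Let $h_0>0$, $u_0>0$ with $u_0^2/(g h_0)>1$. Define $q_e=\tfrac12 u_0^2+g\,(f(r_0)+h_0)$, $q_w=r_0h_0u_0$, $\eta(r)=q_e-g f(r)$ (note $\eta(r)>0$ on $[r_0,r_1]$), and $$\mathcal P^S_r(h)=g h^3-\eta(r)h^2+\frac{q_w^2}{2r^2},\qquad \mathcal P^E_r(h)=g\,\nu(r)\, h^3-\eta(r)h^2+\frac{q_w^2}{2r^2}.$$ Let $\nu^S(r)=1$, $\nu^E(r)=\nu(r)$, $h^M_\star(r)=\dfrac{2\eta(r)}{3g\,\nu^M(r)}$ for $M\in\{E,S\}$. For each $r\in[r_0,r_1]$ and $M\in\{E,S\}$, $h^M(r)$ denotes the unique root of $\mathcal P^M_r$ in the interval $(0,h^M_\star(r))$ (this root exists and $h^M$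 is continuous with $h^M(r_0)=h_0$). *)

theory Defs
  imports "HOL-Analysis.Analysis"
begin

definition nu :: "(real \<Rightarrow> real) \<Rightarrow> real \<Rightarrow> real" where
  "nu f' r = 1 / sqrt (1 + (f' r)^2)"

definition qe :: "real \<Rightarrow> (real \<Rightarrow> real) \<Rightarrow> real \<Rightarrow> real \<Rightarrow> real \<Rightarrow> real" where
  "qe g f r0 h0 u0 = u0^2 / 2 + g * (f r0 + h0)"

definition qw :: "real \<Rightarrow> real \<Rightarrow> real \<Rightarrow> real" where
  "qw r0 h0 u0 = r0 * h0 * u0"

definition eta :: "real \<Rightarrow> (real \<Rightarrow> real) \<Rightarrow> real \<Rightarrow> real \<Rightarrow> real \<Rightarrow> real \<Rightarrow> real" where
  "eta g f r0 h0 u0 r = qe g f r0 h0 u0 - g * f r"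

text \<open>Generic cubic  g*nuM*h^3 - eta*h^2 + qw^2/(2 r^2); nuM = 1 gives P^S, nuM = nu gives P^E.\<close>
definition Pcubic :: "real \<Rightarrow> real \<Rightarrow> real \<Rightarrow> real \<Rightarrow> real \<Rightarrow> real \<Rightarrow> real" where
  "Pcubic g nuM et q r h = g * nuM * h^3 - et * h^2 + q^2 / (2 * r^2)"

definition hstar :: "real \<Rightarrow> real \<Rightarrow> real \<Rightarrow> real" where
  "hstar g nuM et = 2 * et / (3 * g * nuM)"

definition hroot :: "real \<Rightarrow> real \<Rightarrow> real \<Rightarrow> real \<Rightarrow> real \<Rightarrow> real" where
  "hroot g nuM et q r = (THE h. 0 < h \<and> h < hstar g nuM et \<and> Pcubic g nuM et q r h = 0)"

definition hS :: "real \<Rightarrow> (real \<Rightarrow> real) \<Rightarrow> real \<Rightarrow> real \<Rightarrow> real \<Rightarrow> real \<Rightarrow> real" where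
  "hS g f r0 h0 u0 r = hroot g 1 (eta g f r0 h0 u0 r) (qw r0 h0 u0) r"

definition hE :: "real \<Rightarrow> (real \<Rightarrow> real) \<Rightarrow> (real \<Rightarrow> real) \<Rightarrow> real \<Rightarrow> real \<Rightarrow> real \<Rightarrow> real \<Rightarrow> real" where
  "hE g f f' r0 h0 u0 r = hroot g (nu f' r) (eta g f r0 h0 u0 r) (qw r0 h0 u0) r"

definition hQ :: "real \<Rightarrow> (real \<Rightarrow> real) \<Rightarrow> real \<Rightarrow> real \<Rightarrow> real \<Rightarrow> real \<Rightarrow> real" where
  "hQ g f r0 h0 u0 r = qw r0 h0 u0 / (r * sqrt (2 * eta g f r0 h0 u0 r))"

definition Lc :: "real \<Rightarrow> (real \<Rightarrow> real) \<Rightarrow> (real \<Rightarrow> real) \<Rightarrow> real \<Rightarrow> real \<Rightarrow> real \<Rightarrow> real \<Rightarrow> real" where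
  "Lc g f f' r0 h0 u0 r =
     1 / (3 * nu f' r * (2 * eta g f r0 h0 u0 r / (3 * g * nu f' r) - hQ g f r0 h0 u0 r))"

end

theory Submission
  imports Defs
begin

text \<open>On \<open>(0, h\<^sub>\<star>)\<close> the cubic \<open>g \<nu> h\<^sup>3 - \<eta> h\<^sup>2 + c\<close> is strictly decreasing, and it is
  negative at \<open>h\<^sub>\<star>\<close> exactly when \<open>27 g\<^sup>2 \<nu>\<^sup>2 c < 4 \<eta>\<^sup>3\<close>; supercriticality gives this at \<open>r\<^sub>0\<close>,
  and it persists downstream because \<open>\<eta>\<close> grows while \<open>c = q\<^sub>w\<^sup>2/(2r\<^sup>2)\<close> shrinks. Subtracting
  the two cubic equations yields
  \<open>(h\<^sup>S - h\<^sup>E) (\<eta> (h\<^sup>E + h\<^sup>S) - g \<nu> (h\<^sup>E\<^sup>2 + h\<^sup>E h\<^sup>S + h\<^sup>S\<^sup>2)) = g (1 - \<nu>) (h\<^sup>S)\<^sup>3\<close>,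
  whose bracket is positive and, since \<open>h\<^sup>Q < h\<^sup>E \<le> h\<^sup>S\<close>, at most \<open>h\<^sup>S (2\<eta> - 3g\<nu> h\<^sup>Q) = h\<^sup>S g / L\<close>.\<close>

lemma nonpos_derivative_imp_antimono:
  fixes f f' :: "real \<Rightarrow> real"
  assumes deriv: "\<And>x. x \<in> {a..b} \<Longrightarrow> (f has_real_derivative f' x) (at x within {a..b})"
    and nonpos: "\<And>x. x \<in> {a..b} \<Longrightarrow> f' x \<le> 0"
    and xy: "a \<le> x" "x \<le> y" "y \<le> b"
  shows "f y \<le> f x"
proof (rule DERIV_nonpos_imp_decreasing_open[OF \<open>x \<le> y\<close>])
  show "\<exists>d. (f has_real_derivative d) (at z) \<and> d \<le> 0" if "x < z" "z < y" for z
    using deriv[of z] nonpos[of z] that xy at_within_Icc_at[of a z b] by auto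
  have "continuous_on {a..b} f"
    using deriv by (rule DERIV_continuous_on)
  then show "continuous_on {x..y} f"
    by (rule continuous_on_subset) (use xy in auto)
qed

lemma nu_pos: "nu f' r > 0"
  unfolding nu_def by (simp add: add_pos_nonneg)

lemma nu_le_one: "nu f' r \<le> 1"
proof -
  have "1 \<le> sqrt (1 + (f' r)^2)" by simp
  then show ?thesis unfolding nu_def by (simp add: divide_le_eq add_pos_nonneg)
qed

lemma Pcubic_diff:
  "Pcubic g nn et q r x - Pcubic g nn et q r y = (x - y) * (g*nn*(x^2 + x*y + y^2) - et*(x + y))"
  unfolding Pcubic_def by (simp add: algebra_simps power2_eq_square power3_eq_cube)

lemma cubic_bracket_less:
  fixes g nn et x y :: real
  assumes "g > 0" "nn > 0" "0 < x" "0 < y" "x < hstar g nn et" "y < hstar g nn et"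
  shows "g*nn*(x^2 + x*y + y^2) < et*(x + y)"
proof -
  have gn: "g*nn > 0" using assms by simp
  have "g*nn*x < 2*et/3" "g*nn*y < 2*et/3"
    using assms(5,6) gn unfolding hstar_def by (simp_all add: field_simps)
  then have "g*nn*(x + y/2) < et" "g*nn*(y + x/2) < et"
    by (simp_all add: distrib_left)
  then have "x * (g*nn*(x + y/2)) < x * et" "y * (g*nn*(y + x/2)) < y * et"
    using assms(3,4) by (simp_all add: mult_strict_left_mono)
  moreover have "g*nn*(x^2 + x*y + y^2) = x * (g*nn*(x + y/2)) + y * (g*nn*(y + x/2))"
    by (simp add: algebra_simps power2_eq_square)
  ultimately show ?thesis by (simp add: algebra_simps)
qed

lemma Pcubic_hstar_neg:
  fixes g nn et q r :: real
  assumes g: "g > 0" and nn: "nn > 0" and et: "et > 0"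
    and discr: "27 * (g*nn)^2 * (q^2/(2*r^2)) < 4 * et^3"
  shows "Pcubic g nn et q r (hstar g nn et) < 0"
proof -
  define h where "h = hstar g nn et"
  have gnh: "g*nn*h = 2*et/3"
    using g nn unfolding h_def hstar_def by (simp add: field_simps)
  then have "Pcubic g nn et q r h = q^2/(2*r^2) - et*h^2/3"
    unfolding Pcubic_def by (simp add: power3_eq_cube power2_eq_square algebra_simps)
  also have "et*h^2/3 = 4 * et^3 / (27 * (g*nn)^2)"
    using g nn unfolding h_def hstar_def by (simp add: field_simps power2_eq_square power3_eq_cube)
  also have "q^2/(2*r^2) < \<dots>"
    using discr g nn by (simp add: field_simps)
  finally show ?thesis unfolding h_def by simp
qed

lemma hroot_spec:
  fixes g nn et q r :: real
  assumes g: "g > 0" and nn: "nn > 0" and et: "et > 0" and q: "q \<noteq> 0" and r: "r \<noteq> 0"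
    and discr: "27 * (g*nn)^2 * (q^2/(2*r^2)) < 4 * et^3"
  shows "0 < hroot g nn et q r" "hroot g nn et q r < hstar g nn et"
    "Pcubic g nn et q r (hroot g nn et q r) = 0"
proof -
  let ?P = "Pcubic g nn et q r" and ?h = "hstar g nn et"
  have neg: "?P ?h < 0" using Pcubic_hstar_neg[OF g nn et discr] .
  have "?h > 0" using g nn et unfolding hstar_def by simp
  moreover have P0: "?P 0 > 0" using q r unfolding Pcubic_def by simp
  moreover have "\<forall>x. 0 \<le> x \<and> x \<le> ?h \<longrightarrow> isCont ?P x"
    unfolding Pcubic_def by (auto intro!: continuous_intros)
  ultimately obtain x where x: "0 \<le> x" "x \<le> ?h" "?P x = 0"
    using IVT2[of ?P ?h 0 0] neg by force
  have ex: "0 < x \<and> x < ?h \<and> ?P x = 0"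
    using x P0 neg by (auto simp: order.order_iff_strict)
  have "y = x" if y: "0 < y \<and> y < ?h \<and> ?P y = 0" for y
  proof (rule ccontr)
    assume "y \<noteq> x"
    moreover have "(y - x) * (g*nn*(y^2 + y*x + x^2) - et*(y + x)) = 0"
      using y ex Pcubic_diff[of g nn et q r y x] by simp
    ultimately show False
      using cubic_bracket_less[OF g nn, of y x et] y ex by simp
  qed
  then have "hroot g nn et q r = x"
    unfolding hroot_def using ex by (rule the_equality[rotated])
  then show "0 < hroot g nn et q r" "hroot g nn et q r < ?h" "?P (hroot g nn et q r) = 0"
    using ex by simp_all
qed

lemma cubic_amgm:
  fixes a b :: real
  assumes "b > 0" "a > b"
  shows "27*a*b^2 < (a + 2*b)^3"
proof -
  have "(a + 2*b)^3 - 27*a*b^2 = (a - b)^2 * (a + 8*b)"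
    by (simp add: algebra_simps power2_eq_square power3_eq_cube)
  moreover have "(a - b)^2 * (a + 8*b) > 0" using assms by simp
  ultimately show ?thesis by simp
qed

lemma supercritical_discriminant:
  fixes g nn h0 u0 r0 r et :: real
  assumes g: "g > 0" and nn: "0 \<le> nn" "nn \<le> 1" and h0: "h0 > 0" and supercrit: "u0^2 > g*h0"
    and r: "0 < r0" "r0 \<le> r" and et: "u0^2/2 + g*h0 \<le> et"
  shows "27 * (g*nn)^2 * ((r0*h0*u0)^2/(2*r^2)) < 4 * et^3"
proof -
  have "nn^2 \<le> 1" using nn by (rule power_le_one)
  then have "(g*nn)^2 \<le> g^2" by (simp add: power_mult_distrib mult_left_le)
  moreover have "r0^2 \<le> r^2" using r by (simp add: power_mono)
  then have "(r0*h0*u0)^2/(2*r^2) \<le> (r0*h0*u0)^2/(2*r0^2)"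
    using r by (simp add: frac_le)
  ultimately have "27 * (g*nn)^2 * ((r0*h0*u0)^2/(2*r^2)) \<le> 27 * g^2 * ((r0*h0*u0)^2/(2*r0^2))"
    by (intro mult_mono) simp_all
  also have "\<dots> = 27*u0^2*(g*h0)^2/2"
    using r by (simp add: power_mult_distrib field_simps)
  also have "\<dots> < (u0^2 + 2*(g*h0))^3/2"
    using cubic_amgm[of "g*h0" "u0^2"] supercrit g h0 by simp
  also have "\<dots> = 4*(u0^2/2 + g*h0)^3"
    by (simp add: power3_eq_cube algebra_simps)
  also have "\<dots> \<le> 4*et^3"
    using et g h0 by (simp add: power_mono add_pos_nonneg)
  finally show ?thesis .
qed

lemma cubic_roots_gap_identity:
  fixes g nn et c hs he :: real
  assumes "g*hs^3 - et*hs^2 + c = 0" "g*nn*he^3 - et*he^2 + c = 0"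
  shows "(hs - he) * (et*(he + hs) - g*nn*(he^2 + he*hs + hs^2)) = g*(1 - nn)*hs^3"
proof -
  have "(hs - he) * (et*(he + hs) - g*nn*(he^2 + he*hs + hs^2))
      = (et*hs^2 - g*nn*hs^3) - (et*he^2 - g*nn*he^3)"
    by (simp add: algebra_simps power2_eq_square power3_eq_cube)
  also have "\<dots> = g*(1 - nn)*hs^3" using assms by (simp add: algebra_simps)
  finally show ?thesis .
qed

lemma cubic_root_gt:
  fixes g nn et c he hq :: real
  assumes gn: "g*nn > 0" and et: "et > 0" and he: "0 < he"
    and pe: "g*nn*he^3 - et*he^2 + c = 0" and hq: "0 \<le> hq" "et*hq^2 = c"
  shows "hq < he"
proof -
  have "g*nn*he^3 > 0" using gn he by simp
  then have "et*hq^2 < et*he^2" using pe hq by (simp add: algebra_simps)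
  then show ?thesis using et he hq(1) by (simp add: power_less_imp_less_base)
qed

lemma root_gap_lower_bound:
  fixes g nn et c hs he hq :: real
  assumes g: "g > 0" and nn: "0 < nn" "nn \<le> 1" and et: "et > 0"
    and hs: "0 < hs" "hs < hstar g 1 et" and he: "0 < he" "he < hstar g nn et"
    and ps: "g*hs^3 - et*hs^2 + c = 0" and pe: "g*nn*he^3 - et*he^2 + c = 0"
    and hq: "0 \<le> hq" "et*hq^2 = c"
  shows "1 / (3 * nn * (2 * et / (3 * g * nn) - hq)) > 0 \<and>
         hs - he \<ge> 1 / (3 * nn * (2 * et / (3 * g * nn) - hq)) * hs^2 * (1 - nn)"
proof -
  have gn: "g*nn > 0" using g nn by simp
  have hq_he: "hq < he" using cubic_root_gt[OF gn et he(1) pe hq] .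
  have "hstar g 1 et \<le> hstar g nn et" unfolding hstar_def using g nn et by (simp add: frac_le)
  define D where "D = et*(he + hs) - g*nn*(he^2 + he*hs + hs^2)"
  have D_pos: "D > 0"
    using cubic_bracket_less[OF g nn(1) he(1) hs(1) he(2)] hs \<open>hstar g 1 et \<le> hstar g nn et\<close>
    unfolding D_def by simp
  have gap: "(hs - he) * D = g*(1 - nn)*hs^3"
    unfolding D_def by (rule cubic_roots_gap_identity[OF ps pe])
  then have "(hs - he) * D \<ge> 0" using g nn hs by simp
  then have he_hs: "he \<le> hs" using D_pos by (simp add: zero_le_mult_iff)
  have "he^2 + he*hs + hs^2 - 3*hq*hs \<ge> (hs - he)^2"
    using mult_right_mono[OF less_imp_le[OF hq_he], of hs] hs
    by (simp add: power2_eq_square algebra_simps)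
  then have "he^2 + he*hs + hs^2 - 3*hq*hs \<ge> 0"
    by (rule order_trans[OF zero_le_power2])
  then have "g*nn*(he^2 + he*hs + hs^2 - 3*hq*hs) \<ge> 0"
    using gn by simp
  moreover have "et*he \<le> et*hs" using et he_hs by simp
  ultimately have D_le: "D \<le> hs*(2*et - 3*g*nn*hq)"
    unfolding D_def by (simp add: algebra_simps power2_eq_square)
  have "g*(1 - nn)*hs^3 \<le> (hs - he)*(hs*(2*et - 3*g*nn*hq))"
    using gap mult_left_mono[OF D_le, of "hs - he"] he_hs by simp
  then have "hs * (g*(1 - nn)*hs^2) \<le> hs * ((hs - he)*(2*et - 3*g*nn*hq))"
    by (simp add: algebra_simps power2_eq_square power3_eq_cube)
  then have key: "g*(1 - nn)*hs^2 \<le> (hs - he)*(2*et - 3*g*nn*hq)"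
    using hs(1) by simp
  have "g*nn*he < 2*et/3" using he gn unfolding hstar_def by (simp add: field_simps)
  moreover have "g*nn*hq < g*nn*he" using mult_strict_left_mono[OF hq_he gn] .
  ultimately have den_pos: "2*et - 3*g*nn*hq > 0" by simp
  have "3 * nn * (2 * et / (3 * g * nn) - hq) = (2*et - 3*g*nn*hq) / g"
    using g nn by (simp add: field_simps)
  then have L_eq: "1 / (3 * nn * (2 * et / (3 * g * nn) - hq)) = g / (2*et - 3*g*nn*hq)"
    by simp
  have "g / (2*et - 3*g*nn*hq) * hs^2 * (1 - nn) \<le> hs - he"
    using key den_pos by (simp add: pos_divide_le_eq mult.commute mult.left_commute)
  then show ?thesis using L_eq den_pos g by simp
qed

theorem proposition1:
  fixes g r0 r1 h0 u0 :: real and f f' :: "real \<Rightarrow> real"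
  assumes g_pos: "g > 0"
    and r0_pos: "0 < r0" and r01: "r0 < r1"
    and f_deriv: "\<And>r. r \<in> {r0..r1} \<Longrightarrow> (f has_real_derivative f' r) (at r within {r0..r1})"
    and f'_cont: "continuous_on {r0..r1} f'"
    and f'_nonpos: "\<And>r. r \<in> {r0..r1} \<Longrightarrow> f' r \<le> 0"
    and f'_r0: "f' r0 = 0"
    and f_drop: "f r0 > f r1"
    and h0_pos: "h0 > 0" and u0_pos: "u0 > 0"
    and supercrit: "u0^2 / (g * h0) > 1"
    and r: "r \<in> {r0..r1}"
  shows "Lc g f f' r0 h0 u0 r > 0 \<and>
         hS g f r0 h0 u0 r - hE g f f' r0 h0 u0 r
           \<ge> Lc g f f' r0 h0 u0 r * (hS g f r0 h0 u0 r)^2 * (1 - nu f' r)"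
proof -
  define nn et q where "nn = nu f' r" and "et = eta g f r0 h0 u0 r" and "q = qw r0 h0 u0"
  have nn: "0 < nn" "nn \<le> 1" unfolding nn_def by (rule nu_pos nu_le_one)+
  have "f r \<le> f r0"
    using nonpos_derivative_imp_antimono[OF f_deriv f'_nonpos] r by auto
  then have et_ge: "u0^2/2 + g*h0 \<le> et"
    unfolding et_def eta_def qe_def using g_pos by (simp add: algebra_simps)
  moreover have "u0^2/2 + g*h0 > 0" using g_pos h0_pos u0_pos by (simp add: add_pos_pos)
  ultimately have et_pos: "et > 0" by linarith
  have q_pos: "q > 0" and r_pos: "r > 0" unfolding q_def qw_def using r0_pos h0_pos u0_pos r by auto
  then have q_r_nonzero: "q \<noteq> 0" "r \<noteq> 0" by simp_all
  have "u0^2 > g*h0" using supercrit g_pos h0_pos by (simp add: field_simps)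
  then have discr: "27 * (g*n)^2 * (q^2/(2*r^2)) < 4 * et^3" if "0 \<le> n" "n \<le> 1" for n
    unfolding q_def qw_def using supercritical_discriminant[OF g_pos that h0_pos _ r0_pos _ et_ge] r
    by simp
  define hs he hq where "hs = hroot g 1 et q r" and "he = hroot g nn et q r"
    and "hq = q / (r * sqrt (2*et))"
  note hs_spec = hroot_spec[OF g_pos zero_less_one et_pos q_r_nonzero discr[OF zero_le_one order_refl],
      folded hs_def]
  note he_spec = hroot_spec[OF g_pos nn(1) et_pos q_r_nonzero discr[OF less_imp_le[OF nn(1)] nn(2)],
      folded he_def]
  have "0 \<le> hq" "et * hq^2 = q^2/(2*r^2)"
    unfolding hq_def using et_pos r_pos q_pos by (simp_all add: power_divide power_mult_distrib)
  then have "1 / (3 * nn * (2 * et / (3 * g * nn) - hq)) > 0 \<and>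
      hs - he \<ge> 1 / (3 * nn * (2 * et / (3 * g * nn) - hq)) * hs^2 * (1 - nn)"
    using root_gap_lower_bound[OF g_pos nn et_pos hs_spec(1,2) he_spec(1,2), where hq = hq]
      hs_spec(3) he_spec(3)
    unfolding Pcubic_def by simp
  then show ?thesis
    unfolding Lc_def hQ_def hS_def hE_def nn_def et_def q_def hs_def he_def hq_def .
qed

end
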